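(* Let $\gamma:[0,1]\to[0,1]^2$ be a continuous curve with $\gamma(0)=(0,0)$, $\gamma(1)=(1,1)$, and $\pi_2\circ\gamma\in\mathcal U$. Then for each $n\in\mathbb{N}$ there exist continuous functions $y,x_1,\ldots,x_n:[0,1]\to[0,1]$ such that, with $x_0(t)\equiv 0$: (i) $(x_i(t),\,x_{i-1}(t)+y(t))\in\gamma([0,1])$ for all $t\in[0,1]$ and all $i=1,\ldots,n$; (ii) $x_i(0)=y(0)=0$ for all $i=1,\ldots,n$; (iii) $(x_n(1),\,x_{n-1}(1)+y(1))=(1,1)$.
   Context: $\pi_2(a,b)=b$ is the projection onto the $y$-axis. A function $f:[0,1]\to\mathbb{R}$ is called piecewise monotone if there is a partition of $[0,1]$ into finitely many subintervals on each of which $f$ is strictly increasing or strictly decreasing. $\mathcal U$ denotes the set of piecewise monotone continuous functions $f:[0,1]\to[0,1]$ with the property that, for every $c\in[0,1]$, the set $f^{-1}(c)$ does not contain both a local maximum point and a local minimum point of $f$. *)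

theory Defs
  imports "HOL-Analysis.Analysis"
begin

definition strictly_increasing_on :: "real set \<Rightarrow> (real \<Rightarrow> real) \<Rightarrow> bool" where
  "strictly_increasing_on S f \<longleftrightarrow> (\<forall>u\<in>S. \<forall>v\<in>S. u < v \<longrightarrow> f u < f v)"

definition strictly_decreasing_on :: "real set \<Rightarrow> (real \<Rightarrow> real) \<Rightarrow> bool" where
  "strictly_decreasing_on S f \<longleftrightarrow> (\<forall>u\<in>S. \<forall>v\<in>S. u < v \<longrightarrow> f u > f v)"

definition piecewise_monotone :: "(real \<Rightarrow> real) \<Rightarrow> bool" where
  "piecewise_monotone f \<longleftrightarrow>
     (\<exists>(k::nat) (a::nat \<Rightarrow> real). a 0 = 0 \<and> a k = 1 \<and>
        (\<forall>j<k. a j < a (Suc j)) \<and>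
        (\<forall>j<k. strictly_increasing_on {a j..a (Suc j)} f \<or>
               strictly_decreasing_on {a j..a (Suc j)} f))"

definition local_max_point :: "(real \<Rightarrow> real) \<Rightarrow> real \<Rightarrow> bool" where
  "local_max_point f p \<longleftrightarrow> p \<in> {0..1} \<and>
     (\<exists>e>0. \<forall>q\<in>{0..1}. \<bar>q - p\<bar> < e \<longrightarrow> f q \<le> f p)"

definition local_min_point :: "(real \<Rightarrow> real) \<Rightarrow> real \<Rightarrow> bool" where
  "local_min_point f p \<longleftrightarrow> p \<in> {0..1} \<and>
     (\<exists>e>0. \<forall>q\<in>{0..1}. \<bar>q - p\<bar> < e \<longrightarrow> f p \<le> f q)"

definition class_U :: "(real \<Rightarrow> real) set" where
  "class_U = {f. piecewise_monotone f \<and> continuous_on {0..1} f \<and> f ` {0..1} \<subseteq> {0..1} \<and>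
     (\<forall>c\<in>{0..1}. \<not> ((\<exists>p\<in>{0..1}. f p = c \<and> local_max_point f p) \<and>
                        (\<exists>q\<in>{0..1}. f q = c \<and> local_min_point f q)))}"

end

theory Submission
  imports Defs
begin

(*
  Mountain climbing: if f is piecewise monotone, then for every continuous q : [0,1] \<rightarrow> [0,1]
  with q 0 = 0 and q 1 = 1 a path in {(u, v). f u = q v} joins (0, 0) to (1, 1).
  A strictly increasing f is climbable through its inverse, a Z-shaped map is climbable by
  finitely many zigzags (uniform continuity bounds their number), and climbability is preserved
  by composition. A piecewise monotone f is reduced to a strictly increasing one: adjacent pieces
  of equal direction are merged, and in an alternating partition the inner piece of least height
  and its neighbours are folded away by a chord, f being the chord-replaced function composed
  with a Z-shaped map.
  With h = \<pi>\<^sub>2 \<circ> \<gamma> climbable, the points of the chain are found one at a time: the new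
  point climbs \<gamma> at height h while the old chain, reparametrised, tracks the height it must
  match, namely x\<^sub>n + y.
*)

definition profile :: "(real \<Rightarrow> real) \<Rightarrow> bool" where
  "profile f \<longleftrightarrow> continuous_on {0..1} f \<and> f ` {0..1} \<subseteq> {0..1} \<and> f 0 = 0 \<and> f 1 = 1"

definition same_height_set :: "(real \<Rightarrow> real) \<Rightarrow> (real \<Rightarrow> real) \<Rightarrow> (real \<times> real) set" where
  "same_height_set f q = {p \<in> {0..1} \<times> {0..1}. f (fst p) = q (snd p)}"

definition climbable :: "(real \<Rightarrow> real) \<Rightarrow> bool" where
  "climbable f \<longleftrightarrow> (\<forall>q. profile q \<longrightarrow> path_component (same_height_set f q) (0, 0) (1, 1))"

definition continuous_section :: "(real \<Rightarrow> real) \<Rightarrow> (real \<Rightarrow> real) \<Rightarrow> real \<Rightarrow> real \<Rightarrow> bool" where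
  "continuous_section f \<psi> c d \<longleftrightarrow>
     continuous_on {c..d} \<psi> \<and> \<psi> ` {c..d} \<subseteq> {0..1} \<and> (\<forall>y\<in>{c..d}. f (\<psi> y) = y)"

lemma profile_in_unit: "profile f \<Longrightarrow> u \<in> {0..1} \<Longrightarrow> f u \<in> {0..1}"
  unfolding profile_def by blast

lemma continuous_on_subinterval:
  fixes h :: "real \<Rightarrow> 'a::topological_space"
  shows "continuous_on {0..1} h \<Longrightarrow> 0 \<le> x \<Longrightarrow> z \<le> 1 \<Longrightarrow> continuous_on {x..z} h"
  by (erule continuous_on_subset) auto

lemma section_path:
  assumes \<psi>: "continuous_section f \<psi> c d" and q: "continuous_on {0..1} q"
    and st: "0 \<le> s" "s \<le> t" "t \<le> 1" and q_st: "q ` {s..t} \<subseteq> {c..d}"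
  shows "path_component (same_height_set f q) (\<psi> (q s), s) (\<psi> (q t), t)"
proof -
  let ?g = "\<lambda>v. (\<psi> (q v), v)"
  have "continuous_on {s..t} q"
    using q by (rule continuous_on_subset) (use st in auto)
  moreover have "continuous_on {c..d} \<psi>"
    using \<psi> by (simp add: continuous_section_def)
  ultimately have "continuous_on {s..t} (\<lambda>v. \<psi> (q v))"
    using continuous_on_compose2[OF _ _ q_st] by blast
  then have "continuous_on {s..t} ?g"
    by (intro continuous_intros)
  moreover have "?g ` {s..t} \<subseteq> same_height_set f q"
    using \<psi> q_st st unfolding continuous_section_def same_height_set_def by (auto simp: image_subset_iff)
  ultimately have "path_component (?g ` {s..t}) (?g s) (?g t)"
    using st path_connected_continuous_image[of "{s..t}" ?g] convex_imp_path_connected[of "{s..t}"]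
    unfolding path_connected_component by auto
  then show ?thesis
    by (rule path_component_of_subset[OF \<open>?g ` {s..t} \<subseteq> _\<close>])
qed

lemma last_up_crossing:
  fixes p :: "real \<Rightarrow> real"
  assumes p: "continuous_on {s..t} p" and "s \<le> t" "p s \<le> c" "c \<le> p t"
  obtains x where "x \<in> {s..t}" "p x = c" "\<forall>y\<in>{x<..t}. c < p y"
proof -
  let ?K = "{x\<in>{s..t}. p x \<le> c}"
  have bdd: "bdd_above ?K" by (rule bdd_aboveI[of _ t]) auto
  have "closed ?K"
    by (rule continuous_on_closed_Collect_le[OF p]) (auto intro: continuous_intros)
  then have K: "Sup ?K \<in> ?K"
    using assms bdd by (intro closed_contains_Sup) auto
  then obtain x where x: "Sup ?K \<le> x" "x \<le> t" "p x = c"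
    using IVT'[of p "Sup ?K" c t] assms continuous_on_subset[OF p] by auto
  then have "x = Sup ?K"
    using K cSup_upper[OF _ bdd, of x] by auto
  moreover have "c < p y" if "y \<in> {Sup ?K<..t}" for y
    using that K cSup_upper[OF _ bdd, of y] by force
  ultimately show ?thesis
    using that K x by auto
qed

lemma first_up_crossing:
  fixes p :: "real \<Rightarrow> real"
  assumes p: "continuous_on {s..t} p" and "s \<le> t" "p s \<le> c" "c \<le> p t"
  obtains x where "x \<in> {s..t}" "p x = c" "\<forall>y\<in>{s..<x}. p y < c"
proof -
  let ?K = "{x\<in>{s..t}. c \<le> p x}"
  have bdd: "bdd_below ?K" by (rule bdd_belowI[of _ s]) auto
  have "closed ?K"
    by (rule continuous_on_closed_Collect_le[OF _ p]) (auto intro: continuous_intros)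
  then have K: "Inf ?K \<in> ?K"
    using assms bdd by (intro closed_contains_Inf) auto
  then obtain x where x: "s \<le> x" "x \<le> Inf ?K" "p x = c"
    using IVT'[of p s c "Inf ?K"] assms continuous_on_subset[OF p] by auto
  then have "x = Inf ?K"
    using K cInf_lower[OF _ bdd, of x] by auto
  moreover have "p y < c" if "y \<in> {s..<Inf ?K}" for y
    using that K cInf_lower[OF _ bdd, of y] by force
  ultimately show ?thesis
    using that K x by auto
qed

lemma last_down_crossing:
  fixes p :: "real \<Rightarrow> real"
  assumes "continuous_on {s..t} p" "s \<le> t" "p t \<le> c" "c \<le> p s"
  obtains x where "x \<in> {s..t}" "p x = c" "\<forall>y\<in>{x<..t}. p y < c"
proof -
  have "continuous_on {s..t} (\<lambda>x. - p x)"
    using assms(1) by (intro continuous_intros)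
  from last_up_crossing[OF this, of "- c"] assms(2-) that show ?thesis
    by auto
qed

lemma first_down_crossing:
  fixes p :: "real \<Rightarrow> real"
  assumes "continuous_on {s..t} p" "s \<le> t" "p t \<le> c" "c \<le> p s"
  obtains x where "x \<in> {s..t}" "p x = c" "\<forall>y\<in>{s..<x}. c < p y"
proof -
  have "continuous_on {s..t} (\<lambda>x. - p x)"
    using assms(1) by (intro continuous_intros)
  from first_up_crossing[OF this, of "- c"] assms(2-) that show ?thesis
    by auto
qed

lemma climbable_compose:
  assumes f': "climbable f'" and \<phi>: "climbable \<phi>" and f: "\<forall>u\<in>{0..1}. f u = f' (\<phi> u)"
  shows "climbable f"
  unfolding climbable_def
proof (intro allI impI)
  fix q assume "profile q"
  then obtain G where G: "path G" "path_image G \<subseteq> same_height_set f' q"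
    "pathstart G = (0, 0)" "pathfinish G = (1, 1)"
    using f' by (auto simp: climbable_def path_component_def)
  have "profile (\<lambda>r. fst (G r))"
    using G unfolding profile_def same_height_set_def path_def path_image_def pathstart_def pathfinish_def
    by (auto intro: continuous_intros simp: image_subset_iff mem_Times_iff)
  then obtain H where H: "path H" "path_image H \<subseteq> same_height_set \<phi> (\<lambda>r. fst (G r))"
    "pathstart H = (0, 0)" "pathfinish H = (1, 1)"
    using \<phi> by (auto simp: climbable_def path_component_def)
  have H2: "snd (H r) \<in> {0..1}" if "r \<in> {0..1}" for r
    using H(2) that by (auto simp: path_image_def same_height_set_def image_subset_iff mem_Times_iff)
  \<comment> \<open>The second climber follows G, reparametrised by the second coordinate of H.\<close>
  let ?K = "\<lambda>r. (fst (H r), snd (G (snd (H r))))"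
  have "continuous_on {0..1} (\<lambda>r. snd (G r))" "continuous_on {0..1} (\<lambda>r. snd (H r))"
    using G(1) H(1) unfolding path_def by (auto intro: continuous_intros)
  then have snd_K: "continuous_on {0..1} (\<lambda>r. snd (G (snd (H r))))"
    using continuous_on_compose2[of "{0..1}" "\<lambda>r. snd (G r)" "{0..1}" "\<lambda>r. snd (H r)"] H2
    by (auto simp: image_subset_iff)
  then have "path ?K"
    using H(1) unfolding path_def by (intro continuous_on_Pair[OF _ snd_K] continuous_intros)
  moreover have "path_image ?K \<subseteq> same_height_set f q"
    unfolding path_image_def image_subset_iff
  proof
    fix r :: real assume r: "r \<in> {0..1}"
    have "H r \<in> same_height_set \<phi> (\<lambda>r. fst (G r))" "G (snd (H r)) \<in> same_height_set f' q"
      using H(2) G(2) r H2[OF r] by (auto simp: path_image_def)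
    then show "?K r \<in> same_height_set f q"
      using f by (auto simp: same_height_set_def mem_Times_iff)
  qed
  ultimately show "path_component (same_height_set f q) (0, 0) (1, 1)"
    unfolding path_component_def using G(3,4) H(3,4)
    by (intro exI[of _ ?K]) (auto simp: pathstart_def pathfinish_def)
qed

text \<open>A Z-shaped map \<open>\<phi>\<close>, given by continuous inverse branches over \<open>[0, B']\<close>, \<open>[B, B']\<close> and
  \<open>[B, 1]\<close> that meet at its turning points.\<close>
locale zigzag =
  fixes \<phi> \<psi>1 \<psi>2 \<psi>3 :: "real \<Rightarrow> real" and B B' :: real
  assumes levels: "0 \<le> B" "B < B'" "B' \<le> 1"
    and left_section: "continuous_section \<phi> \<psi>1 0 B'"
    and middle_section: "continuous_section \<phi> \<psi>2 B B'"
    and right_section: "continuous_section \<phi> \<psi>3 B 1"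
    and branches_meet: "\<psi>1 0 = 0" "\<psi>1 B' = \<psi>2 B'" "\<psi>2 B = \<psi>3 B" "\<psi>3 1 = 1"
begin

declare path_component_trans [trans]

context
  fixes q assumes q: "profile q"
begin

lemma q_cont: "continuous_on {0..1} q"
  using q by (simp add: profile_def)

lemma left_branch_path:
  assumes "0 \<le> s" "s \<le> t" "t \<le> 1" "\<forall>y\<in>{s..t}. q y \<le> B'"
  shows "path_component (same_height_set \<phi> q) (\<psi>1 (q s), s) (\<psi>1 (q t), t)"
  using assms profile_in_unit[OF q]
  by (intro section_path[OF left_section q_cont]) (auto simp: image_subset_iff)

lemma middle_branch_path:
  assumes "0 \<le> s" "s \<le> t" "t \<le> 1" "\<forall>y\<in>{s..t}. B \<le> q y \<and> q y \<le> B'"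
  shows "path_component (same_height_set \<phi> q) (\<psi>2 (q s), s) (\<psi>2 (q t), t)"
  using assms by (intro section_path[OF middle_section q_cont]) (auto simp: image_subset_iff)

lemma right_branch_path:
  assumes "0 \<le> s" "s \<le> t" "t \<le> 1" "\<forall>y\<in>{s..t}. B \<le> q y"
  shows "path_component (same_height_set \<phi> q) (\<psi>3 (q s), s) (\<psi>3 (q t), t)"
  using assms profile_in_unit[OF q]
  by (intro section_path[OF right_section q_cont]) (auto simp: image_subset_iff)

lemma left_to_right_branch:
  assumes "0 \<le> t" "t \<le> r" "r \<le> 1" "q t = B" "q r = B'" "\<forall>y\<in>{t..r}. B \<le> q y \<and> q y \<le> B'"
  shows "path_component (same_height_set \<phi> q) (\<psi>1 (q t), t) (\<psi>3 (q t), t)"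
proof -
  have "path_component (same_height_set \<phi> q) (\<psi>1 (q t), t) (\<psi>1 (q r), r)"
    using assms by (intro left_branch_path) auto
  also have "(\<psi>1 (q r), r) = (\<psi>2 (q r), r)"
    using assms branches_meet by simp
  also have "path_component (same_height_set \<phi> q) \<dots> (\<psi>2 (q t), t)"
    using assms by (intro middle_branch_path[THEN path_component_sym]) auto
  also have "(\<psi>2 (q t), t) = (\<psi>3 (q t), t)"
    using assms branches_meet by simp
  finally show ?thesis .
qed

lemma right_to_left_branch:
  assumes "0 \<le> t" "t \<le> r" "r \<le> 1" "q t = B'" "q r = B" "\<forall>y\<in>{t..r}. B \<le> q y \<and> q y \<le> B'"
  shows "path_component (same_height_set \<phi> q) (\<psi>3 (q t), t) (\<psi>1 (q t), t)"
proof -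
  have "path_component (same_height_set \<phi> q) (\<psi>3 (q t), t) (\<psi>3 (q r), r)"
    using assms by (intro right_branch_path) auto
  also have "(\<psi>3 (q r), r) = (\<psi>2 (q r), r)"
    using assms branches_meet by simp
  also have "path_component (same_height_set \<phi> q) \<dots> (\<psi>2 (q t), t)"
    using assms by (intro middle_branch_path[THEN path_component_sym]) auto
  also have "(\<psi>2 (q t), t) = (\<psi>1 (q t), t)"
    using assms branches_meet by simp
  finally show ?thesis .
qed

lemma excursion:
  assumes times: "0 \<le> t0" "t0 \<le> r0" "r0 \<le> t1" "t1 \<le> r1" "r1 \<le> v" "v \<le> 1"
    and heights: "q t0 = B" "q r0 = B'" "q t1 = B'" "q r1 = B"
    and below: "\<forall>y\<in>{t0..r0}. q y \<le> B'" "\<forall>y\<in>{t1..v}. q y \<le> B'"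
    and above: "\<forall>y\<in>{t0..r1}. B \<le> q y"
  shows "path_component (same_height_set \<phi> q) (\<psi>1 (q t0), t0) (\<psi>1 (q v), v)"
proof -
  have "path_component (same_height_set \<phi> q) (\<psi>1 (q t0), t0) (\<psi>3 (q t0), t0)"
    using assms by (intro left_to_right_branch[of t0 r0]) auto
  also have "path_component (same_height_set \<phi> q) \<dots> (\<psi>3 (q t1), t1)"
    using assms by (intro right_branch_path) auto
  also have "path_component (same_height_set \<phi> q) \<dots> (\<psi>1 (q t1), t1)"
    using assms by (intro right_to_left_branch[of t1 r1]) auto
  also have "path_component (same_height_set \<phi> q) \<dots> (\<psi>1 (q v), v)"
    using assms by (intro left_branch_path) auto
  finally show ?thesis .
qed

lemma last_excursion:
  assumes v: "v \<in> {0..1}" "q v \<le> B" and x0: "x0 \<in> {0..v}" "B' < q x0"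
  obtains t0 r0 where "0 \<le> t0" "t0 \<le> r0" "r0 \<le> v" "q t0 = B" "q r0 = B'"
    "path_component (same_height_set \<phi> q) (\<psi>1 (q t0), t0) (\<psi>1 (q v), v)"
proof -
  note cont = continuous_on_subinterval[OF q_cont]
  have q0: "q 0 = 0"
    using q by (simp add: profile_def)
  obtain t1 where t1: "t1 \<in> {x0..v}" "q t1 = B'" "\<forall>y\<in>{t1<..v}. q y < B'"
    using last_down_crossing[OF cont, of x0 v B'] x0 v levels by auto
  obtain t0 where t0: "t0 \<in> {0..t1}" "q t0 = B" "\<forall>y\<in>{t0<..t1}. B < q y"
    using last_up_crossing[OF cont, of 0 t1 B] t1 x0 v levels q0 by auto
  obtain r0 where r0: "r0 \<in> {t0..t1}" "q r0 = B'" "\<forall>y\<in>{t0..<r0}. q y < B'"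
    using first_up_crossing[OF cont, of t0 t1 B'] t0 t1 x0 v levels by auto
  obtain r1 where r1: "r1 \<in> {t1..v}" "q r1 = B" "\<forall>y\<in>{t1..<r1}. B < q y"
    using first_down_crossing[OF cont, of t1 v B] t1 x0 v levels by auto
  have "path_component (same_height_set \<phi> q) (\<psi>1 (q t0), t0) (\<psi>1 (q v), v)"
  proof (rule excursion)
    show "\<forall>y\<in>{t0..r0}. q y \<le> B'"
      using r0 by (metis atLeastAtMost_iff atLeastLessThan_iff le_less less_le_not_le)
    show "\<forall>y\<in>{t1..v}. q y \<le> B'"
      using t1 by (metis greaterThanAtMost_iff atLeastAtMost_iff le_less)
    show "\<forall>y\<in>{t0..r1}. B \<le> q y"
      using t0 r1 by (metis atLeastAtMost_iff atLeastLessThan_iff greaterThanAtMost_iff le_less linorder_not_le)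
  qed (use t0 t1 r0 r1 x0 v in auto)
  then show ?thesis
    using that t0 r0 t1 x0 by auto
qed

lemma reach_left_branch:
  assumes "v \<in> {0..1}" "q v \<le> B"
  shows "path_component (same_height_set \<phi> q) (0, 0) (\<psi>1 (q v), v)"
proof -
  \<comment> \<open>By uniform continuity every excursion of q from B up to B' lasts at least \<open>\<delta>\<close>.\<close>
  obtain \<delta> where \<delta>: "\<delta> > 0" "\<And>x x'. x \<in> {0..1} \<Longrightarrow> x' \<in> {0..1} \<Longrightarrow> dist x' x < \<delta> \<Longrightarrow> dist (q x') (q x) < B' - B"
    using compact_uniformly_continuous[OF q_cont] levels(2)
    unfolding uniformly_continuous_on_def by (metis compact_Icc diff_gt_0_iff_gt)
  have "path_component (same_height_set \<phi> q) (0, 0) (\<psi>1 (q v), v)"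
    if "v \<in> {0..1}" "q v \<le> B" "v < real N * \<delta>" for N v
    using that
  proof (induction N arbitrary: v)
    case 0
    then show ?case using \<delta>(1) by simp
  next
    case (Suc N)
    show ?case
    proof (cases "\<forall>y\<in>{0..v}. q y \<le> B'")
      case True
      then show ?thesis
        using left_branch_path[of 0 v] Suc.prems q branches_meet(1) by (auto simp: profile_def)
    next
      case False
      then obtain x0 where "x0 \<in> {0..v}" "B' < q x0"
        by (auto simp: not_le)
      then obtain t0 r0 where t0: "0 \<le> t0" "t0 \<le> r0" "r0 \<le> v" "q t0 = B" "q r0 = B'"
        and excursion: "path_component (same_height_set \<phi> q) (\<psi>1 (q t0), t0) (\<psi>1 (q v), v)"
        using last_excursion[OF Suc.prems(1,2)] by blast
      have "\<not> dist r0 t0 < \<delta>"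
        using \<delta>(2)[of t0 r0] t0 Suc.prems by (auto simp: dist_real_def)
      then have "t0 < real N * \<delta>"
        using t0 Suc.prems by (auto simp: dist_real_def algebra_simps)
      then have "path_component (same_height_set \<phi> q) (0, 0) (\<psi>1 (q t0), t0)"
        using Suc.IH t0 Suc.prems by auto
      then show ?thesis
        using excursion by (rule path_component_trans)
    qed
  qed
  moreover obtain N where "v < real N * \<delta>"
    using ex_less_of_nat_mult \<delta>(1) by blast
  ultimately show ?thesis
    using assms by blast
qed

end

lemma climbable: "climbable \<phi>"
  unfolding climbable_def
proof (intro allI impI)
  fix q assume q: "profile q"
  then have cont: "continuous_on {0..1} q" "q 0 = 0" "q 1 = 1"
    by (simp_all add: profile_def)
  obtain t where t: "t \<in> {0..1}" "q t = B" "\<forall>y\<in>{t<..1}. B < q y"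
    using last_up_crossing[OF cont(1), of B] cont levels by auto
  have "continuous_on {t..1} q"
    using cont(1) by (rule continuous_on_subset) (use t in auto)
  then obtain r where r: "r \<in> {t..1}" "q r = B'" "\<forall>y\<in>{t..<r}. q y < B'"
    using first_up_crossing[of t 1 q B'] cont levels t by auto
  have above: "\<forall>y\<in>{t..1}. B \<le> q y"
    using t by (metis atLeastAtMost_iff greaterThanAtMost_iff le_less)
  have "path_component (same_height_set \<phi> q) (0, 0) (\<psi>1 (q t), t)"
    using reach_left_branch[OF q, of t] t levels by auto
  also have "path_component (same_height_set \<phi> q) \<dots> (\<psi>3 (q t), t)"
  proof (rule left_to_right_branch[OF q, of t r])
    show "\<forall>y\<in>{t..r}. B \<le> q y \<and> q y \<le> B'"
      using above r by (metis atLeastAtMost_iff atLeastLessThan_iff le_less order.trans)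
  qed (use t r in auto)
  also have "path_component (same_height_set \<phi> q) \<dots> (\<psi>3 (q 1), 1)"
    using right_branch_path[OF q, of t 1] above t by auto
  finally show "path_component (same_height_set \<phi> q) (0, 0) (1, 1)"
    using cont(3) branches_meet(4) by simp
qed

end

definition strictly_monotone_on :: "real set \<Rightarrow> (real \<Rightarrow> real) \<Rightarrow> bool" where
  "strictly_monotone_on S f \<longleftrightarrow> strictly_increasing_on S f \<or> strictly_decreasing_on S f"

lemma strictly_increasing_on_le:
  "strictly_increasing_on S f \<Longrightarrow> u \<in> S \<Longrightarrow> v \<in> S \<Longrightarrow> u \<le> v \<Longrightarrow> f u \<le> f v"
  unfolding strictly_increasing_on_def by (cases "u = v") (auto simp: le_less)

lemma strictly_decreasing_on_le:
  "strictly_decreasing_on S f \<Longrightarrow> u \<in> S \<Longrightarrow> v \<in> S \<Longrightarrow> u \<le> v \<Longrightarrow> f v \<le> f u"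
  unfolding strictly_decreasing_on_def by (cases "u = v") (auto simp: le_less)

lemma strictly_increasing_on_subset:
  "strictly_increasing_on S f \<Longrightarrow> T \<subseteq> S \<Longrightarrow> strictly_increasing_on T f"
  unfolding strictly_increasing_on_def by blast

lemma strictly_decreasing_on_subset:
  "strictly_decreasing_on S f \<Longrightarrow> T \<subseteq> S \<Longrightarrow> strictly_decreasing_on T f"
  unfolding strictly_decreasing_on_def by blast

lemma strictly_monotone_on_subset:
  "strictly_monotone_on S f \<Longrightarrow> T \<subseteq> S \<Longrightarrow> strictly_monotone_on T f"
  unfolding strictly_monotone_on_def
  using strictly_increasing_on_subset strictly_decreasing_on_subset by blast

lemma strictly_increasing_on_cong:
  "strictly_increasing_on S f \<Longrightarrow> (\<And>u. u \<in> S \<Longrightarrow> g u = f u) \<Longrightarrow> strictly_increasing_on S g"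
  unfolding strictly_increasing_on_def by auto

lemma strictly_decreasing_on_cong:
  "strictly_decreasing_on S f \<Longrightarrow> (\<And>u. u \<in> S \<Longrightarrow> g u = f u) \<Longrightarrow> strictly_decreasing_on S g"
  unfolding strictly_decreasing_on_def by auto

lemma strictly_monotone_on_cong:
  "strictly_monotone_on S f \<Longrightarrow> (\<And>u. u \<in> S \<Longrightarrow> g u = f u) \<Longrightarrow> strictly_monotone_on S g"
  unfolding strictly_monotone_on_def
  using strictly_increasing_on_cong strictly_decreasing_on_cong by blast

lemma strictly_increasing_on_join:
  assumes "strictly_increasing_on {x..y} f" "strictly_increasing_on {y..z} f"
  shows "strictly_increasing_on {x..z} f"
  unfolding strictly_increasing_on_def
proof (intro ballI impI)
  fix u v assume "u \<in> {x..z}" "v \<in> {x..z}" "u < v"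
  then consider "v \<le> y" | "y \<le> u" | "u < y" "y < v" by fastforce
  then show "f u < f v"
  proof cases
    case 3
    then have "f u < f y" "f y < f v"
      using assms \<open>u \<in> {x..z}\<close> \<open>v \<in> {x..z}\<close> unfolding strictly_increasing_on_def by auto
    then show ?thesis by simp
  qed (use assms \<open>u \<in> {x..z}\<close> \<open>v \<in> {x..z}\<close> \<open>u < v\<close> in \<open>auto simp: strictly_increasing_on_def\<close>)
qed

lemma strictly_decreasing_on_join:
  assumes "strictly_decreasing_on {x..y} f" "strictly_decreasing_on {y..z} f"
  shows "strictly_decreasing_on {x..z} f"
proof -
  have "strictly_increasing_on {x..z} (\<lambda>u. - f u)"
    using assms by (intro strictly_increasing_on_join[of x y _ z])
      (auto simp: strictly_increasing_on_def strictly_decreasing_on_def)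
  then show ?thesis
    by (simp add: strictly_increasing_on_def strictly_decreasing_on_def)
qed

lemma strictly_monotone_on_imp_inj_on:
  assumes "strictly_monotone_on S f"
  shows "inj_on f S"
proof (rule inj_onI)
  fix u v assume "u \<in> S" "v \<in> S" "f u = f v"
  with assms show "u = v"
    unfolding strictly_monotone_on_def strictly_increasing_on_def strictly_decreasing_on_def
    by (metis less_irrefl linorder_neqE)
qed

lemma strictly_monotone_on_image:
  assumes f: "continuous_on {x..z} f" and "x \<le> z" and mono: "strictly_monotone_on {x..z} f"
  shows "f ` {x..z} = closed_segment (f x) (f z)"
proof
  show "closed_segment (f x) (f z) \<subseteq> f ` {x..z}"
    using IVT'_closed_segment_real[of _ f x z] f closed_segment_eq_real_ivl1[OF \<open>x \<le> z\<close>]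
    by auto
  show "f ` {x..z} \<subseteq> closed_segment (f x) (f z)"
  proof clarify
    fix u assume u: "u \<in> {x..z}"
    from mono consider (inc) "strictly_increasing_on {x..z} f" | (dec) "strictly_decreasing_on {x..z} f"
      unfolding strictly_monotone_on_def by blast
    then have "f x \<le> f u \<and> f u \<le> f z \<or> f z \<le> f u \<and> f u \<le> f x"
    proof cases
      case inc
      then show ?thesis
        using u \<open>x \<le> z\<close> strictly_increasing_on_le[OF inc] by simp
    next
      case dec
      then show ?thesis
        using u \<open>x \<le> z\<close> strictly_decreasing_on_le[OF dec] by simp
    qed
    then show "f u \<in> closed_segment (f x) (f z)"
      by (auto simp: closed_segment_eq_real_ivl)
  qed
qed

lemma strictly_increasing_on_endpoints:
  "strictly_increasing_on {x..z} f \<Longrightarrow> x < z \<Longrightarrow> f x < f z"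
  unfolding strictly_increasing_on_def by (meson atLeastAtMost_iff less_imp_le order_refl)

lemma strictly_decreasing_on_endpoints:
  "strictly_decreasing_on {x..z} f \<Longrightarrow> x < z \<Longrightarrow> f z < f x"
  unfolding strictly_decreasing_on_def by (meson atLeastAtMost_iff less_imp_le order_refl)

lemma strictly_monotone_on_increasing_iff:
  assumes "strictly_monotone_on {x..z} f" "x < z"
  shows "strictly_increasing_on {x..z} f \<longleftrightarrow> f x < f z"
  using assms strictly_increasing_on_endpoints strictly_decreasing_on_endpoints
  unfolding strictly_monotone_on_def by (meson less_asym)

lemma strictly_monotone_on_decreasing_iff:
  assumes "strictly_monotone_on {x..z} f" "x < z"
  shows "strictly_decreasing_on {x..z} f \<longleftrightarrow> f z < f x"
  using assms strictly_increasing_on_endpoints strictly_decreasing_on_endpoints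
  unfolding strictly_monotone_on_def by (meson less_asym)

lemma continuous_on_inv_into_comp:
  fixes f :: "real \<Rightarrow> real"
  assumes "continuous_on {x..z} f" "inj_on f {x..z}"
    and "continuous_on S g" "g ` S \<subseteq> f ` {x..z}"
  shows "continuous_on S (\<lambda>y. inv_into {x..z} f (g y))"
proof -
  have "continuous_on (f ` {x..z}) (inv_into {x..z} f)"
    by (rule continuous_on_inv[OF assms(1)]) (use assms(2) in auto)
  then show ?thesis
    using assms(3,4) by (rule continuous_on_compose2)
qed

lemma climbable_strictly_increasing:
  assumes f: "profile f" and mono: "strictly_increasing_on {0..1} f"
  shows "climbable f"
  unfolding climbable_def
proof (intro allI impI)
  fix q assume q: "profile q"
  have f01: "continuous_on {0..1} f" "f 0 = 0" "f 1 = 1"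
    using f by (simp_all add: profile_def)
  have smono: "strictly_monotone_on {0..1} f"
    using mono by (simp add: strictly_monotone_on_def)
  have img: "f ` {0..1} = {0..1}"
    using strictly_monotone_on_image[OF f01(1) _ smono] f01 by (simp add: closed_segment_eq_real_ivl1)
  have inj: "inj_on f {0..1}"
    by (rule strictly_monotone_on_imp_inj_on[OF smono])
  have "inv_into {0..1} f y \<in> {0..1}" "f (inv_into {0..1} f y) = y" if "y \<in> {0..1}" for y
    using that img by (metis inv_into_into, metis f_inv_into_f)
  moreover have "continuous_on {0..1} (inv_into {0..1} f)"
    using continuous_on_inv_into_comp[OF f01(1) inj, of "{0..1}" "\<lambda>y. y"] img by simp
  ultimately have "continuous_section f (inv_into {0..1} f) 0 1"
    unfolding continuous_section_def by auto
  then have "path_component (same_height_set f q) (inv_into {0..1} f (q 0), 0) (inv_into {0..1} f (q 1), 1)"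
    using q by (intro section_path) (auto simp: profile_def)
  moreover have "inv_into {0..1} f 0 = 0" "inv_into {0..1} f 1 = 1"
    using inv_into_f_f[OF inj, of 0] inv_into_f_f[OF inj, of 1] f01 by auto
  ultimately show "path_component (same_height_set f q) (0, 0) (1, 1)"
    using q by (simp add: profile_def)
qed

text \<open>f runs through the range of g on \<open>[b, b']\<close> three times, so it factors through g by a Z-shaped map.\<close>
locale fold_configuration =
  fixes f g :: "real \<Rightarrow> real" and b A1 A2 b' :: real
  assumes f_cont: "continuous_on {0..1} f" and g_cont: "continuous_on {0..1} g"
    and order: "0 \<le> b" "b \<le> A1" "A1 < A2" "A2 < b'" "b' \<le> 1"
    and agree: "\<And>u. u \<in> {0..1} \<Longrightarrow> u \<le> b \<or> b' \<le> u \<Longrightarrow> g u = f u"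
    and g_mono: "strictly_monotone_on {b..b'} g"
    and f_mono: "strictly_monotone_on {b..A1} f" "strictly_monotone_on {A1..A2} f"
      "strictly_monotone_on {A2..b'} f"
    and turns: "f A1 = f b'" "f A2 = f b"
begin

definition fold_map :: "real \<Rightarrow> real" where
  "fold_map u = (if u \<in> {b..b'} then inv_into {b..b'} g (f u) else u)"

lemma g_ends: "g b = f b" "g b' = f b'"
  using agree order by auto

lemma g_image: "g ` {b..b'} = closed_segment (f b) (f b')" "inj_on g {b..b'}"
  using strictly_monotone_on_image[OF continuous_on_subinterval[OF g_cont] _ g_mono]
    strictly_monotone_on_imp_inj_on[OF g_mono] order g_ends by auto

lemma f_piece_images:
  "f ` {b..A1} = g ` {b..b'}" "inj_on f {b..A1}"
  "f ` {A1..A2} = g ` {b..b'}" "inj_on f {A1..A2}"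
  "f ` {A2..b'} = g ` {b..b'}" "inj_on f {A2..b'}"
  using strictly_monotone_on_image[OF continuous_on_subinterval[OF f_cont] _ f_mono(1)]
    strictly_monotone_on_image[OF continuous_on_subinterval[OF f_cont] _ f_mono(2)]
    strictly_monotone_on_image[OF continuous_on_subinterval[OF f_cont] _ f_mono(3)]
    f_mono[THEN strictly_monotone_on_imp_inj_on] order turns g_image(1)
  by (auto simp: closed_segment_commute)

lemma f_eq_g_fold_map: "u \<in> {0..1} \<Longrightarrow> f u = g (fold_map u)"
proof (cases "u \<in> {b..b'}")
  case True
  then have "f u \<in> g ` {b..b'}"
    using f_piece_images by (cases "u \<le> A1"; cases "u \<le> A2") auto
  then show ?thesis
    using True by (simp add: fold_map_def f_inv_into_f)
qed (use agree in \<open>auto simp: fold_map_def\<close>)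

lemma fold_map_eq: "w \<in> {b..b'} \<Longrightarrow> y \<in> {b..b'} \<Longrightarrow> f w = g y \<Longrightarrow> fold_map w = y"
  using g_image(2) by (simp add: fold_map_def)

lemma fold_map_outside: "y \<in> {0..1} \<Longrightarrow> y \<le> b \<or> b' \<le> y \<Longrightarrow> fold_map y = y"
  using fold_map_eq[of y y] agree[of y] by (cases "y \<in> {b..b'}") (auto simp: fold_map_def)

lemma inverse_branch:
  assumes "f ` {x..z} = g ` {b..b'}" "inj_on f {x..z}" "b \<le> x" "x \<le> z" "z \<le> b'"
  shows "continuous_on {b..b'} (\<lambda>y. inv_into {x..z} f (g y))"
    and "y \<in> {b..b'} \<Longrightarrow> inv_into {x..z} f (g y) \<in> {x..z}"
    and "y \<in> {b..b'} \<Longrightarrow> fold_map (inv_into {x..z} f (g y)) = y"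
proof -
  show "continuous_on {b..b'} (\<lambda>y. inv_into {x..z} f (g y))"
    using assms order
    by (intro continuous_on_inv_into_comp continuous_on_subinterval[OF f_cont]
        continuous_on_subinterval[OF g_cont]) auto
  assume y: "y \<in> {b..b'}"
  then have gy: "g y \<in> f ` {x..z}"
    using assms by auto
  then show "inv_into {x..z} f (g y) \<in> {x..z}"
    by (rule inv_into_into)
  then show "fold_map (inv_into {x..z} f (g y)) = y"
    using fold_map_eq y f_inv_into_f[OF gy] assms by auto
qed

lemma inverse_branch_ends:
  "inv_into {b..A1} f (g b) = b" "inv_into {b..A1} f (g b') = A1"
  "inv_into {A1..A2} f (g b') = A1" "inv_into {A1..A2} f (g b) = A2"
  "inv_into {A2..b'} f (g b) = A2" "inv_into {A2..b'} f (g b') = b'"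
  using inv_into_f_f[OF f_piece_images(2), of b] inv_into_f_f[OF f_piece_images(2), of A1]
    inv_into_f_f[OF f_piece_images(4), of A1] inv_into_f_f[OF f_piece_images(4), of A2]
    inv_into_f_f[OF f_piece_images(6), of A2] inv_into_f_f[OF f_piece_images(6), of b']
    g_ends turns order
  by auto

lemma zigzag_fold_map:
  "zigzag fold_map (\<lambda>y. if y \<le> b then y else inv_into {b..A1} f (g y))
     (\<lambda>y. inv_into {A1..A2} f (g y)) (\<lambda>y. if y \<le> b' then inv_into {A2..b'} f (g y) else y) b b'"
proof
  have le: "A1 \<le> b'" "A1 \<le> A2" "A2 \<le> b'" "b \<le> A2"
    using order by auto
  note branch1 = inverse_branch[OF f_piece_images(1,2) order_refl order(2) le(1)]
  note branch2 = inverse_branch[OF f_piece_images(3,4) order(2) le(2) le(3)]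
  note branch3 = inverse_branch[OF f_piece_images(5,6) le(4) le(3) order_refl]
  show "0 \<le> b" "b < b'" "b' \<le> 1"
    using order by auto
  have "continuous_on {0..b'} (\<lambda>y. if y \<le> b then y else inv_into {b..A1} f (g y))"
  proof (rule continuous_on_cases_le)
    show "continuous_on {y \<in> {0..b'}. b \<le> y} (\<lambda>y. inv_into {b..A1} f (g y))"
      using branch1(1) by (rule continuous_on_subset) auto
  qed (auto intro: continuous_intros simp: inverse_branch_ends)
  moreover have "(if y \<le> b then y else inv_into {b..A1} f (g y)) \<in> {0..1}"
    "fold_map (if y \<le> b then y else inv_into {b..A1} f (g y)) = y" if "y \<in> {0..b'}" for y
    using that branch1(2,3)[of y] fold_map_outside[of y] order le by auto
  ultimately show "continuous_section fold_map (\<lambda>y. if y \<le> b then y else inv_into {b..A1} f (g y)) 0 b'"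
    unfolding continuous_section_def image_subset_iff by blast
  have "inv_into {A1..A2} f (g y) \<in> {0..1}" if "y \<in> {b..b'}" for y
    using branch2(2)[OF that] order by auto
  then show "continuous_section fold_map (\<lambda>y. inv_into {A1..A2} f (g y)) b b'"
    using branch2(1,3) unfolding continuous_section_def image_subset_iff by blast
  have "continuous_on {b..1} (\<lambda>y. if y \<le> b' then inv_into {A2..b'} f (g y) else y)"
  proof (rule continuous_on_cases_le)
    show "continuous_on {y \<in> {b..1}. y \<le> b'} (\<lambda>y. inv_into {A2..b'} f (g y))"
      using branch3(1) by (rule continuous_on_subset) auto
  qed (auto intro: continuous_intros simp: inverse_branch_ends)
  moreover have "(if y \<le> b' then inv_into {A2..b'} f (g y) else y) \<in> {0..1}"
    "fold_map (if y \<le> b' then inv_into {A2..b'} f (g y) else y) = y" if "y \<in> {b..1}" for y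
    using that branch3(2,3)[of y] fold_map_outside[of y] order le by auto
  ultimately show "continuous_section fold_map (\<lambda>y. if y \<le> b' then inv_into {A2..b'} f (g y) else y) b 1"
    unfolding continuous_section_def image_subset_iff by blast
  show "(\<lambda>y. if y \<le> b' then inv_into {A2..b'} f (g y) else y) 1 = 1"
  proof (cases "b' = 1")
    case True
    then show ?thesis
      using inverse_branch_ends(6) by simp
  qed (use order in simp)
qed (use order in \<open>auto simp: inverse_branch_ends\<close>)

lemma climbable_if_folded_climbable: "climbable g \<Longrightarrow> climbable f"
  using climbable_compose[OF _ zigzag.climbable[OF zigzag_fold_map]] f_eq_g_fold_map by blast

end

definition monotone_partition :: "nat \<Rightarrow> (nat \<Rightarrow> real) \<Rightarrow> (real \<Rightarrow> real) \<Rightarrow> bool" where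
  "monotone_partition k a f \<longleftrightarrow> a 0 = 0 \<and> a k = 1 \<and> (\<forall>j<k. a j < a (Suc j)) \<and>
     (\<forall>j<k. strictly_monotone_on {a j..a (Suc j)} f)"

lemma piecewise_monotone_iff: "piecewise_monotone f \<longleftrightarrow> (\<exists>k a. monotone_partition k a f)"
  unfolding piecewise_monotone_def monotone_partition_def strictly_monotone_on_def ..

lemma monotone_partition_less:
  assumes "monotone_partition k a f" "i < i'" "i' \<le> k"
  shows "a i < a i'"
  using assms(2,3)
proof (induction i')
  case (Suc i')
  then have "a i' < a (Suc i')"
    using assms(1) by (simp add: monotone_partition_def)
  with Suc show ?case
    by (cases "i = i'") auto
qed simp

lemma monotone_partition_le:
  "monotone_partition k a f \<Longrightarrow> i \<le> i' \<Longrightarrow> i' \<le> k \<Longrightarrow> a i \<le> a i'"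
  using monotone_partition_less[of k a f i i'] by (cases "i = i'") auto

lemma monotone_partition_unit:
  "monotone_partition k a f \<Longrightarrow> i \<le> k \<Longrightarrow> a i \<in> {0..1}"
  using monotone_partition_le[of k a f 0 i] monotone_partition_le[of k a f i k]
  by (auto simp: monotone_partition_def)

lemma monotone_partition_delete:
  assumes part: "monotone_partition k a f" and "i + d < k"
    and agree: "\<And>u. u \<in> {0..1} \<Longrightarrow> u \<le> a i \<or> a (Suc (i + d)) \<le> u \<Longrightarrow> g u = f u"
    and mono: "strictly_monotone_on {a i..a (Suc (i + d))} g"
  shows "monotone_partition (k - d) (\<lambda>m. if m \<le> i then a m else a (m + d)) g"
proof -
  let ?a = "\<lambda>m. if m \<le> i then a m else a (m + d)"
  have a: "a 0 = 0" "a k = 1" "\<And>j. j < k \<Longrightarrow> a j < a (Suc j)"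
    "\<And>j. j < k \<Longrightarrow> strictly_monotone_on {a j..a (Suc j)} f"
    using part by (auto simp: monotone_partition_def)
  have unit: "{a j..a (Suc j)} \<subseteq> {0..1}" if "j < k" for j
    using monotone_partition_unit[OF part, of j] monotone_partition_unit[OF part, of "Suc j"] that by auto
  have "?a j < ?a (Suc j) \<and> strictly_monotone_on {?a j..?a (Suc j)} g" if j: "j < k - d" for j
  proof (cases j i rule: linorder_cases)
    case less
    have "a (Suc j) \<le> a i"
      using monotone_partition_le[OF part, of "Suc j" i] less assms(2) by auto
    moreover have "j < k"
      using less assms(2) by simp
    ultimately have "g u = f u" if "u \<in> {a j..a (Suc j)}" for u
      using agree[of u] unit[of j] that by auto
    then have "strictly_monotone_on {a j..a (Suc j)} g"
      using a(4)[OF \<open>j < k\<close>] by (rule strictly_monotone_on_cong[rotated])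
    then show ?thesis
      using a(3)[of j] less assms(2) by auto
  next
    case equal
    then show ?thesis
      using monotone_partition_less[OF part, of i "Suc (i + d)"] mono assms(2) by auto
  next
    case greater
    have "a (Suc (i + d)) \<le> a (j + d)"
      using monotone_partition_le[OF part, of "Suc (i + d)" "j + d"] greater j by auto
    moreover have "j + d < k"
      using j by simp
    ultimately have "g u = f u" if "u \<in> {a (j + d)..a (Suc (j + d))}" for u
      using agree[of u] unit[of "j + d"] that by auto
    then have "strictly_monotone_on {a (j + d)..a (Suc (j + d))} g"
      using a(4)[OF \<open>j + d < k\<close>] by (rule strictly_monotone_on_cong[rotated])
    then show ?thesis
      using a(3)[of "j + d"] greater j by auto
  qed
  moreover have "?a (k - d) = 1"
    using a(2) assms(2) by auto
  ultimately show ?thesis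
    using a(1) by (simp add: monotone_partition_def)
qed

definition chord_replace :: "(real \<Rightarrow> real) \<Rightarrow> real \<Rightarrow> real \<Rightarrow> real \<Rightarrow> real" where
  "chord_replace f b b' u = (if u \<in> {b..b'} then f b + (u - b) / (b' - b) * (f b' - f b) else f u)"

lemma chord_replace_outside:
  "b < b' \<Longrightarrow> u \<le> b \<or> b' \<le> u \<Longrightarrow> chord_replace f b b' u = f u"
  by (auto simp: chord_replace_def)

lemma continuous_on_chord_replace:
  assumes f: "continuous_on {0..1} f" and "0 \<le> b" "b < b'" "b' \<le> 1"
  shows "continuous_on {0..1} (chord_replace f b b')"
proof -
  let ?h = "chord_replace f b b'"
  have left: "continuous_on {0..b} ?h" and right: "continuous_on {b'..1} ?h"
    using assms chord_replace_outside[of b b' _ f]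
    by (auto intro: continuous_on_eq[OF continuous_on_subset[OF f]])
  have "continuous_on {b..b'} (\<lambda>u. f b + (u - b) / (b' - b) * (f b' - f b))"
    using assms by (intro continuous_intros) auto
  then have middle: "continuous_on {b..b'} ?h"
    by (rule continuous_on_eq) (simp add: chord_replace_def)
  have "continuous_on ({0..b} \<union> {b..b'} \<union> {b'..1}) ?h"
    by (intro continuous_on_closed_Un left middle right) auto
  moreover have "{0..b} \<union> {b..b'} \<union> {b'..1} = {0..1::real}"
    using assms by auto
  ultimately show ?thesis by simp
qed

lemma strictly_increasing_on_chord_replace:
  assumes "b < b'" "f b < f b'"
  shows "strictly_increasing_on {b..b'} (chord_replace f b b')"
  unfolding strictly_increasing_on_def chord_replace_def
proof (intro ballI impI)
  fix u v :: real assume "u \<in> {b..b'}" "v \<in> {b..b'}" "u < v"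
  then have "(u - b) / (b' - b) * (f b' - f b) < (v - b) / (b' - b) * (f b' - f b)"
    using assms by (intro mult_strict_right_mono divide_strict_right_mono) auto
  with \<open>u \<in> {b..b'}\<close> \<open>v \<in> {b..b'}\<close> show "(if u \<in> {b..b'} then f b + (u - b) / (b' - b) * (f b' - f b) else f u)
    < (if v \<in> {b..b'} then f b + (v - b) / (b' - b) * (f b' - f b) else f v)"
    by simp
qed

lemma strictly_decreasing_on_chord_replace:
  assumes "b < b'" "f b' < f b"
  shows "strictly_decreasing_on {b..b'} (chord_replace f b b')"
  unfolding strictly_decreasing_on_def chord_replace_def
proof (intro ballI impI)
  fix u v :: real assume "u \<in> {b..b'}" "v \<in> {b..b'}" "u < v"
  then have "(v - b) / (b' - b) * (f b' - f b) < (u - b) / (b' - b) * (f b' - f b)"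
    using assms by (intro mult_strict_right_mono_neg divide_strict_right_mono) auto
  with \<open>u \<in> {b..b'}\<close> \<open>v \<in> {b..b'}\<close> show "(if u \<in> {b..b'} then f b + (u - b) / (b' - b) * (f b' - f b) else f u)
    > (if v \<in> {b..b'} then f b + (v - b) / (b' - b) * (f b' - f b) else f v)"
    by simp
qed

lemma zigzag_has_short_inner_step:
  fixes v :: "nat \<Rightarrow> real"
  assumes "3 \<le> k" "v 0 = 0" "v k = 1" "\<forall>i\<le>k. v i \<in> {0..1}" "\<forall>j<k. v j \<noteq> v (Suc j)"
    and zig: "\<forall>j. Suc (Suc j) \<le> k \<longrightarrow> (v j < v (Suc j) \<longleftrightarrow> v (Suc (Suc j)) < v (Suc j))"
  shows "\<exists>j. 1 \<le> j \<and> Suc (Suc j) \<le> k \<and>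
    v (Suc j) \<in> closed_segment (v (j - 1)) (v j) \<and>
    v j \<in> closed_segment (v (Suc j)) (v (Suc (Suc j)))"
proof -
  \<comment> \<open>An inner step of minimal height lies within the height range of both of its neighbours.\<close>
  define J where "J = {1..k - 2}"
  define step where "step i = \<bar>v i - v (Suc i)\<bar>" for i
  have "finite J" "J \<noteq> {}"
    using assms(1) by (auto simp: J_def)
  then have "Min (step ` J) \<in> step ` J"
    by simp
  then obtain j where j: "j \<in> J" "step j = Min (step ` J)"
    by auto
  have min: "step j \<le> step i" if "i \<in> J" for i
    using j(2) \<open>finite J\<close> that by simp
  have bounds: "1 \<le> j" "Suc (Suc j) \<le> k"
    using j(1) assms(1) by (auto simp: J_def)
  have zig_j: "v (j - 1) < v j \<longleftrightarrow> v (Suc j) < v j" "v j < v (Suc j) \<longleftrightarrow> v (Suc (Suc j)) < v (Suc j)"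
    using zig[rule_format, of "j - 1"] zig[rule_format, of j] bounds by auto
  have steps: "v (j - 1) \<noteq> v j" "v j \<noteq> v (Suc j)" "v (Suc j) \<noteq> v (Suc (Suc j))"
    using assms(5)[rule_format, of "j - 1"] assms(5)[rule_format, of j] assms(5)[rule_format, of "Suc j"] bounds
    by auto
  have unit: "v (j - 1) \<in> {0..1}" "v j \<in> {0..1}" "v (Suc j) \<in> {0..1}" "v (Suc (Suc j)) \<in> {0..1}"
    using assms(4) bounds by auto
  have "v (Suc j) \<in> closed_segment (v (j - 1)) (v j)"
  proof (cases "j = 1")
    case True
    then show ?thesis
      using zig_j steps unit assms(2) by (auto simp: closed_segment_eq_real_ivl)
  next
    case False
    then have "step j \<le> step (j - 1)"
      using bounds by (intro min) (auto simp: J_def)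
    then show ?thesis
      using zig_j steps bounds by (auto simp: step_def closed_segment_eq_real_ivl)
  qed
  moreover have "v j \<in> closed_segment (v (Suc j)) (v (Suc (Suc j)))"
  proof (cases "Suc (Suc j) = k")
    case True
    then show ?thesis
      using zig_j steps unit assms(3) by (auto simp: closed_segment_eq_real_ivl)
  next
    case False
    then have "step j \<le> step (Suc j)"
      using bounds by (intro min) (auto simp: J_def)
    then show ?thesis
      using zig_j steps by (auto simp: step_def closed_segment_eq_real_ivl)
  qed
  ultimately show ?thesis
    using bounds by blast
qed

lemma strictly_increasing_on_chord_join:
  assumes "x \<le> b" "b < b'" "b' \<le> z" "f b < f b'"
    and "strictly_increasing_on {x..b} f" "strictly_increasing_on {b'..z} f"
  shows "strictly_increasing_on {x..z} (chord_replace f b b')"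
proof -
  have "strictly_increasing_on {x..b} (chord_replace f b b')"
    using assms(5) by (rule strictly_increasing_on_cong) (use assms(2) in \<open>auto simp: chord_replace_outside\<close>)
  moreover have "strictly_increasing_on {b'..z} (chord_replace f b b')"
    using assms(6) by (rule strictly_increasing_on_cong) (use assms(2) in \<open>auto simp: chord_replace_outside\<close>)
  ultimately show ?thesis
    using strictly_increasing_on_chord_replace[OF assms(2,4)] strictly_increasing_on_join by blast
qed

lemma strictly_decreasing_on_chord_join:
  assumes "x \<le> b" "b < b'" "b' \<le> z" "f b' < f b"
    and "strictly_decreasing_on {x..b} f" "strictly_decreasing_on {b'..z} f"
  shows "strictly_decreasing_on {x..z} (chord_replace f b b')"
proof -
  have "strictly_decreasing_on {x..b} (chord_replace f b b')"
    using assms(5) by (rule strictly_decreasing_on_cong) (use assms(2) in \<open>auto simp: chord_replace_outside\<close>)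
  moreover have "strictly_decreasing_on {b'..z} (chord_replace f b b')"
    using assms(6) by (rule strictly_decreasing_on_cong) (use assms(2) in \<open>auto simp: chord_replace_outside\<close>)
  ultimately show ?thesis
    using strictly_decreasing_on_chord_replace[OF assms(2,4)] strictly_decreasing_on_join by blast
qed

lemma profile_chord_replace:
  assumes f: "profile f" and "0 \<le> b" "b < b'" "b' \<le> 1" "f b \<noteq> f b'"
  shows "profile (chord_replace f b b')"
proof -
  let ?h = "chord_replace f b b'"
  have cont: "continuous_on {0..1} ?h"
    using f assms by (intro continuous_on_chord_replace) (auto simp: profile_def)
  have "strictly_monotone_on {b..b'} ?h"
    using strictly_increasing_on_chord_replace[of b b' f] strictly_decreasing_on_chord_replace[of b b' f]
      assms by (cases "f b < f b'") (auto simp: strictly_monotone_on_def)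
  then have "?h ` {b..b'} = closed_segment (f b) (f b')"
    using strictly_monotone_on_image[of b b' ?h] continuous_on_subset[OF cont] assms
    by (simp add: chord_replace_outside)
  also have "\<dots> \<subseteq> {0..1}"
    using assms profile_in_unit[OF f] by (intro closed_segment_subset) auto
  finally have "?h u \<in> {0..1}" if "u \<in> {0..1}" for u
    using that profile_in_unit[OF f, of u] chord_replace_outside[OF assms(3), of u f]
    by (cases "u \<in> {b..b'}") (auto simp: image_subset_iff)
  then show ?thesis
    using cont f assms chord_replace_outside[OF assms(3), of 0 f] chord_replace_outside[OF assms(3), of 1 f]
    by (auto simp: profile_def)
qed

lemma strictly_monotone_on_ends_neq:
  "strictly_monotone_on {x..z} f \<Longrightarrow> x < z \<Longrightarrow> f x \<noteq> f z"
  unfolding strictly_monotone_on_def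
  using strictly_increasing_on_endpoints[of x z f] strictly_decreasing_on_endpoints[of x z f] by auto

lemma monotone_partition_piece:
  assumes "monotone_partition k a f" "j < k"
  shows "a j < a (Suc j)" "strictly_monotone_on {a j..a (Suc j)} f" "f (a j) \<noteq> f (a (Suc j))"
  using assms strictly_monotone_on_ends_neq by (auto simp: monotone_partition_def)

lemma fold_three_pieces:
  fixes f :: "real \<Rightarrow> real"
  assumes f: "profile f"
    and order: "0 \<le> A0" "A0 < A1" "A1 < A2" "A2 < A3" "A3 \<le> 1"
    and mono: "strictly_monotone_on {A0..A1} f" "strictly_monotone_on {A1..A2} f"
      "strictly_monotone_on {A2..A3} f"
    and alternate: "f A0 < f A1 \<longleftrightarrow> f A2 < f A1" "f A1 < f A2 \<longleftrightarrow> f A3 < f A2"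
    and short: "f A2 \<in> closed_segment (f A0) (f A1)" "f A1 \<in> closed_segment (f A2) (f A3)"
  obtains g where "profile g" "strictly_monotone_on {A0..A3} g"
    "\<And>u. u \<le> A0 \<or> A3 \<le> u \<Longrightarrow> g u = f u" "climbable g \<Longrightarrow> climbable f"
proof -
  have f_cont: "continuous_on {0..1} f"
    using f by (simp add: profile_def)
  have jumps: "f A0 \<noteq> f A1" "f A1 \<noteq> f A2" "f A2 \<noteq> f A3"
    using mono order strictly_monotone_on_ends_neq by blast+
  obtain b where b: "b \<in> {A0..A1}" "f b = f A2"
    using IVT'_closed_segment_real[of "f A2" f A0 A1] short(1) continuous_on_subinterval[OF f_cont, of A0 A1]
      order by (auto simp: closed_segment_eq_real_ivl1)
  obtain b' where b': "b' \<in> {A2..A3}" "f b' = f A1"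
    using IVT'_closed_segment_real[of "f A1" f A2 A3] short(2) continuous_on_subinterval[OF f_cont, of A2 A3]
      order by (auto simp: closed_segment_eq_real_ivl1)
  have "A2 \<noteq> b'"
    using b' jumps by auto
  then have bb': "A2 < b'" "b < b'"
    using b b' order by auto
  define g where "g = chord_replace f b b'"
  have agree: "g u = f u" if "u \<le> b \<or> b' \<le> u" for u
    using chord_replace_outside[OF bb'(2) that] by (simp add: g_def)
  \<comment> \<open>The outer pieces have the same direction as the chord from \<open>(b, f A2)\<close> to \<open>(b', f A1)\<close>.\<close>
  have g_mono: "strictly_monotone_on {A0..A3} g"
  proof (cases "f A0 < f A1")
    case True
    then have "strictly_increasing_on {A0..A1} f" "strictly_increasing_on {A2..A3} f"
      using alternate jumps mono order strictly_monotone_on_increasing_iff by auto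
    then have "strictly_increasing_on {A0..A3} g"
      unfolding g_def using b b' bb' True alternate
      by (intro strictly_increasing_on_chord_join) (auto elim: strictly_increasing_on_subset)
    then show ?thesis
      by (simp add: strictly_monotone_on_def)
  next
    case False
    then have "f A1 < f A0" "f A1 < f A2"
      using alternate jumps by auto
    then have "strictly_decreasing_on {A0..A1} f" "strictly_decreasing_on {A2..A3} f"
      using alternate jumps mono order strictly_monotone_on_decreasing_iff by auto
    then have "strictly_decreasing_on {A0..A3} g"
      unfolding g_def using b b' bb' \<open>f A1 < f A2\<close>
      by (intro strictly_decreasing_on_chord_join) (auto elim: strictly_decreasing_on_subset)
    then show ?thesis
      by (simp add: strictly_monotone_on_def)
  qed
  have "profile g"
    unfolding g_def using b b' bb' order jumps by (intro profile_chord_replace[OF f]) auto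
  have fold: "fold_configuration f g b A1 A2 b'"
  proof
    show "continuous_on {0..1} g"
      using \<open>profile g\<close> by (simp add: profile_def)
    show "strictly_monotone_on {b..b'} g"
      by (rule strictly_monotone_on_subset[OF g_mono]) (use b b' in auto)
    show "strictly_monotone_on {b..A1} f" "strictly_monotone_on {A2..b'} f"
      using mono b b' by (auto elim: strictly_monotone_on_subset)
  qed (use f_cont b b' bb' order mono agree in auto)
  show ?thesis
  proof (rule that)
    show "g u = f u" if "u \<le> A0 \<or> A3 \<le> u" for u
      using agree b b' that by auto
    show "climbable f" if "climbable g"
      using fold_configuration.climbable_if_folded_climbable[OF fold that] .
  qed fact+
qed

lemma monotone_partition_fold:
  assumes part: "monotone_partition k a f" and f: "profile f" and "3 \<le> k"
    and zig: "\<forall>j. Suc (Suc j) \<le> k \<longrightarrow> (f (a j) < f (a (Suc j)) \<longleftrightarrow> f (a (Suc (Suc j))) < f (a (Suc j)))"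
  obtains g a' where "monotone_partition (k - 2) a' g" "profile g" "climbable g \<Longrightarrow> climbable f"
proof -
  have "\<exists>j. 1 \<le> j \<and> Suc (Suc j) \<le> k \<and>
    f (a (Suc j)) \<in> closed_segment (f (a (j - 1))) (f (a j)) \<and>
    f (a j) \<in> closed_segment (f (a (Suc j))) (f (a (Suc (Suc j))))"
    using part f \<open>3 \<le> k\<close> zig profile_in_unit[OF f] monotone_partition_unit[OF part]
      monotone_partition_piece(3)[OF part]
    by (intro zigzag_has_short_inner_step) (auto simp: monotone_partition_def profile_def)
  then obtain j where j: "1 \<le> j" "Suc (Suc j) \<le> k"
    "f (a (Suc j)) \<in> closed_segment (f (a (j - 1))) (f (a j))"
    "f (a j) \<in> closed_segment (f (a (Suc j))) (f (a (Suc (Suc j))))"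
    by blast
  have sj: "Suc (j - 1) = j"
    using j by simp
  note pieces = monotone_partition_piece[OF part, of "j - 1"] monotone_partition_piece[OF part, of j]
    monotone_partition_piece[OF part, of "Suc j"]
  obtain g where g: "profile g" "strictly_monotone_on {a (j - 1)..a (Suc (Suc j))} g"
    "\<And>u. u \<le> a (j - 1) \<or> a (Suc (Suc j)) \<le> u \<Longrightarrow> g u = f u" "climbable g \<Longrightarrow> climbable f"
  proof (rule fold_three_pieces[OF f _ _ _ _ _ _ _ _ _ _ j(3,4)])
    show "0 \<le> a (j - 1)" "a (Suc (Suc j)) \<le> 1"
      using monotone_partition_unit[OF part, of "j - 1"] monotone_partition_unit[OF part, of "Suc (Suc j)"] j
      by auto
  qed (use pieces j sj zig[rule_format, of "j - 1"] zig[rule_format, of j] in auto)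
  have "monotone_partition (k - 2) (\<lambda>m. if m \<le> j - 1 then a m else a (m + 2)) g"
    using j g(2,3) by (intro monotone_partition_delete[OF part]) auto
  with g(1,4) that show ?thesis
    by blast
qed

lemma monotone_partition_merge:
  assumes part: "monotone_partition k a f" and "Suc (Suc j) \<le> k"
    and same: "f (a j) < f (a (Suc j)) \<longleftrightarrow> f (a (Suc j)) < f (a (Suc (Suc j)))"
  shows "monotone_partition (k - 1) (\<lambda>m. if m \<le> j then a m else a (m + 1)) f"
proof -
  note piece = monotone_partition_piece[OF part]
  have pieces: "j < k" "Suc j < k"
    using assms(2) by auto
  have "strictly_monotone_on {a j..a (Suc (Suc j))} f"
  proof (cases "f (a j) < f (a (Suc j))")
    case True
    then have inc: "strictly_increasing_on {a j..a (Suc j)} f"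
      "strictly_increasing_on {a (Suc j)..a (Suc (Suc j))} f"
      using same strictly_monotone_on_increasing_iff[OF piece(2,1)[OF pieces(1)]]
        strictly_monotone_on_increasing_iff[OF piece(2,1)[OF pieces(2)]] by auto
    then show ?thesis
      using strictly_increasing_on_join[OF inc] by (simp add: strictly_monotone_on_def)
  next
    case False
    then have "f (a (Suc j)) < f (a j)" "f (a (Suc (Suc j))) < f (a (Suc j))"
      using same piece(3)[OF pieces(1)] piece(3)[OF pieces(2)] by auto
    then have dec: "strictly_decreasing_on {a j..a (Suc j)} f"
      "strictly_decreasing_on {a (Suc j)..a (Suc (Suc j))} f"
      using strictly_monotone_on_decreasing_iff[OF piece(2,1)[OF pieces(1)]]
        strictly_monotone_on_decreasing_iff[OF piece(2,1)[OF pieces(2)]] by auto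
    then show ?thesis
      using strictly_decreasing_on_join[OF dec] by (simp add: strictly_monotone_on_def)
  qed
  then show ?thesis
    using assms(2) by (intro monotone_partition_delete[OF part]) auto
qed

lemma climbable_if_monotone_partition:
  "monotone_partition k a f \<Longrightarrow> profile f \<Longrightarrow> climbable f"
proof (induction k arbitrary: a f rule: less_induct)
  case (less k)
  note part = less.prems(1) and f = less.prems(2)
  note piece = monotone_partition_piece[OF part]
  have "k \<noteq> 0"
    using part by (cases k) (auto simp: monotone_partition_def)
  show ?case
  proof (cases "\<forall>j. Suc (Suc j) \<le> k \<longrightarrow> (f (a j) < f (a (Suc j)) \<longleftrightarrow> f (a (Suc (Suc j))) < f (a (Suc j)))")
    case False
    then obtain j where "Suc (Suc j) \<le> k"
      "\<not> (f (a j) < f (a (Suc j)) \<longleftrightarrow> f (a (Suc (Suc j))) < f (a (Suc j)))"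
      by blast
    then have "monotone_partition (k - 1) (\<lambda>m. if m \<le> j then a m else a (m + 1)) f"
      using piece(3)[of "Suc j"] by (intro monotone_partition_merge[OF part]) auto
    then show ?thesis
      using less.IH[of "k - 1"] f \<open>k \<noteq> 0\<close> by auto
  next
    case zigzag: True
    have f01: "f 0 = 0" "f 1 = 1"
      using f by (simp_all add: profile_def)
    consider "k = 1" | "k = 2" | "3 \<le> k"
      using \<open>k \<noteq> 0\<close> by linarith
    then show ?thesis
    proof cases
      case 1
      then have "strictly_increasing_on {0..1} f"
        using piece(1,2)[of 0] part f01 strictly_monotone_on_increasing_iff
        by (auto simp: monotone_partition_def)
      then show ?thesis
        using climbable_strictly_increasing[OF f] by blast
    next
      case 2
      \<comment> \<open>The first piece must rise from 0 and the last must rise to 1, so they cannot alternate.\<close>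
      have "f (a 1) \<in> {0..1}"
        using profile_in_unit[OF f] monotone_partition_unit[OF part, of 1] 2 by auto
      then show ?thesis
        using zigzag piece(3)[of 0] part f01 2 by (auto simp: monotone_partition_def numeral_2_eq_2)
    next
      case 3
      then obtain g a' where "monotone_partition (k - 2) a' g" "profile g" "climbable g \<Longrightarrow> climbable f"
        using monotone_partition_fold[OF part f _ zigzag] by blast
      then show ?thesis
        using less.IH[of "k - 2"] 3 by auto
    qed
  qed
qed

theorem climbable_if_piecewise_monotone:
  "piecewise_monotone f \<Longrightarrow> profile f \<Longrightarrow> climbable f"
  using climbable_if_monotone_partition piecewise_monotone_iff by blast

text \<open>s i t is the curve parameter of the i-th point; the chain of the theorem is \<open>x i = g \<circ> s i\<close>,
  \<open>y = h \<circ> s 1\<close>.\<close>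
definition climbing_chain :: "(real \<Rightarrow> real) \<Rightarrow> (real \<Rightarrow> real) \<Rightarrow> nat \<Rightarrow> (nat \<Rightarrow> real \<Rightarrow> real) \<Rightarrow> bool" where
  "climbing_chain g h n s \<longleftrightarrow> s 0 = (\<lambda>t. 0) \<and>
     (\<forall>i\<in>{1..n}. continuous_on {0..1} (s i) \<and> s i ` {0..1} \<subseteq> {0..1} \<and> s i 0 = 0) \<and> s n 1 = 1 \<and>
     (\<forall>i\<in>{1..n}. \<forall>t\<in>{0..1}. h (s i t) = g (s (i - 1) t) + h (s 1 t))"

lemma first_hit_profile:
  fixes p :: "real \<Rightarrow> real"
  assumes p: "continuous_on {0..1} p" "p 0 = 0" "1 \<le> p 1" and nonneg: "\<And>r. r \<in> {0..1} \<Longrightarrow> 0 \<le> p r"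
  obtains T where "T \<in> {0..1}" "profile (\<lambda>v. p (T * v))"
proof -
  obtain T where T: "T \<in> {0..1}" "p T = 1" "\<forall>r\<in>{0..<T}. p r < 1"
    using first_up_crossing[OF p(1), of 1] p by auto
  have T_unit: "T * v \<in> {0..1}" if "v \<in> {0..1}" for v
    using that T by (auto simp: mult_le_one)
  have "profile (\<lambda>v. p (T * v))"
    unfolding profile_def
  proof (intro conjI)
    show "continuous_on {0..1} (\<lambda>v. p (T * v))"
      by (rule continuous_on_compose2[OF p(1)]) (auto intro: continuous_intros T_unit)
    have "p (T * v) \<le> 1" if "v \<in> {0..1}" for v
      using T(1,2) T(3)[rule_format, of "T * v"] T_unit[OF that] that mult_left_le[of v T]
      by (cases "T * v < T") auto
    then show "(\<lambda>v. p (T * v)) ` {0..1} \<subseteq> {0..1}"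
      using nonneg T_unit by auto
  qed (use p T in simp_all)
  then show ?thesis
    using that T(1) by blast
qed

lemma climbing_chain_exists:
  assumes g: "profile g" and h: "profile h" "climbable h" and "1 \<le> n"
  shows "\<exists>s. climbing_chain g h n s"
  using \<open>1 \<le> n\<close>
proof (induction n rule: nat_induct_at_least)
  case base
  have "climbing_chain g h 1 (\<lambda>i t. if i = 0 then 0 else t)"
    using g by (auto simp: climbing_chain_def profile_def)
  then show ?case by blast
next
  case (Suc n)
  then obtain s where s: "climbing_chain g h n s"
    by blast
  have s_n: "continuous_on {0..1} (s n)" "s n ` {0..1} \<subseteq> {0..1}" "s n 0 = 0" "s n 1 = 1"
    and s_1: "continuous_on {0..1} (s 1)" "s 1 ` {0..1} \<subseteq> {0..1}" "s 1 0 = 0"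
    using s Suc.hyps by (auto simp: climbing_chain_def)
  have s_0: "s 0 = (\<lambda>t. 0)"
    and s_eq: "\<And>i t. i \<in> {1..n} \<Longrightarrow> t \<in> {0..1} \<Longrightarrow> h (s i t) = g (s (i - 1) t) + h (s 1 t)"
    using s unfolding climbing_chain_def by blast+
  have gh: "continuous_on {0..1} g" "continuous_on {0..1} h" "g 0 = 0" "g 1 = 1" "h 0 = 0"
    using g h by (simp_all add: profile_def)
  \<comment> \<open>The height the new point has to reach.\<close>
  define p where "p r = g (s n r) + h (s 1 r)" for r
  have p_cont: "continuous_on {0..1} p"
    unfolding p_def
    by (intro continuous_on_add continuous_on_compose2[OF gh(1) s_n(1,2)]
        continuous_on_compose2[OF gh(2) s_1(1,2)])
  have p_nonneg: "0 \<le> p r" if "r \<in> {0..1}" for r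
  proof -
    have "s n r \<in> {0..1}" "s 1 r \<in> {0..1}"
      using that s_n(2) s_1(2) by (auto simp: image_subset_iff)
    then have "g (s n r) \<in> {0..1}" "h (s 1 r) \<in> {0..1}"
      using profile_in_unit[OF g] profile_in_unit[OF h(1)] by blast+
    then show ?thesis
      by (simp add: p_def)
  qed
  have p_ends: "p 0 = 0" "1 \<le> p 1"
    using gh s_n s_1 p_nonneg[of 1] profile_in_unit[OF h(1), of "s 1 1"] by (auto simp: p_def image_subset_iff)
  obtain T where T: "T \<in> {0..1}" "profile (\<lambda>v. p (T * v))"
    using first_hit_profile[OF p_cont p_ends p_nonneg] by blast
  have T_unit: "T * v \<in> {0..1}" if "v \<in> {0..1}" for v
    using that T(1) by (auto simp: mult_le_one)
  define q where "q v = p (T * v)" for v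
  have "profile q"
    using T(2) by (simp add: q_def[abs_def])
  then obtain G where G: "path G" "path_image G \<subseteq> same_height_set h q"
    "pathstart G = (0, 0)" "pathfinish G = (1, 1)"
    using h(2) by (auto simp: climbable_def path_component_def)
  have G_cont: "continuous_on {0..1} (\<lambda>r. fst (G r))" "continuous_on {0..1} (\<lambda>r. T * snd (G r))"
    using G(1) by (auto simp: path_def intro: continuous_intros)
  have G_mem: "fst (G r) \<in> {0..1}" "T * snd (G r) \<in> {0..1}" "h (fst (G r)) = p (T * snd (G r))"
    if "r \<in> {0..1}" for r
  proof -
    have "G r \<in> same_height_set h q"
      using G(2) that by (auto simp: path_image_def)
    then show "fst (G r) \<in> {0..1}" "T * snd (G r) \<in> {0..1}" "h (fst (G r)) = p (T * snd (G r))"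
      using T_unit[of "snd (G r)"] by (auto simp: same_height_set_def q_def mem_Times_iff)
  qed
  \<comment> \<open>The new point climbs along the first coordinate of G; the old chain is reparametrised by the second.\<close>
  define s' where "s' i r = (if i = Suc n then fst (G r) else s i (T * snd (G r)))" for i r
  have "continuous_on {0..1} (s' i) \<and> s' i ` {0..1} \<subseteq> {0..1} \<and> s' i 0 = 0" if "i \<in> {1..Suc n}" for i
  proof (cases "i = Suc n")
    case False
    then have "continuous_on {0..1} (s i)" "s i ` {0..1} \<subseteq> {0..1}" "s i 0 = 0"
      using s that by (auto simp: climbing_chain_def)
    moreover have "continuous_on {0..1} (\<lambda>r. s i (T * snd (G r)))"
      using G_mem(2) by (intro continuous_on_compose2[OF calculation(1) G_cont(2)]) auto
    ultimately show ?thesis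
      using False G_mem(2) G(3) by (auto simp: s'_def pathstart_def image_subset_iff)
  qed (use G_cont G_mem G(3) in \<open>auto simp: s'_def pathstart_def\<close>)
  moreover have "h (s' i r) = g (s' (i - 1) r) + h (s' 1 r)" if "i \<in> {1..Suc n}" "r \<in> {0..1}" for i r
  proof (cases "i = Suc n")
    case False
    then have "i \<in> {1..n}"
      using that(1) by auto
    have "h (s' i r) = h (s i (T * snd (G r)))"
      using False by (simp add: s'_def)
    also have "\<dots> = g (s (i - 1) (T * snd (G r))) + h (s 1 (T * snd (G r)))"
      by (rule s_eq[OF \<open>i \<in> {1..n}\<close> G_mem(2)[OF that(2)]])
    also have "\<dots> = g (s' (i - 1) r) + h (s' 1 r)"
      using \<open>i \<in> {1..n}\<close> Suc.hyps by (auto simp: s'_def)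
    finally show ?thesis .
  qed (use G_mem[OF that(2)] Suc.hyps in \<open>simp add: s'_def p_def\<close>)
  ultimately have "climbing_chain g h (Suc n) s'"
    using s_0 G(4) by (auto simp: climbing_chain_def s'_def pathfinish_def)
  then show ?case by blast
qed

theorem proposition1:
  fixes \<gamma> :: "real \<Rightarrow> real \<times> real" and n :: nat
  assumes "continuous_on {0..1} \<gamma>"
    and "\<gamma> ` {0..1} \<subseteq> {0..1} \<times> {0..1}"
    and "\<gamma> 0 = (0, 0)" and "\<gamma> 1 = (1, 1)"
    and "snd \<circ> \<gamma> \<in> class_U"
    and "n \<ge> 1"
  shows "\<exists>(y::real \<Rightarrow> real) (x::nat \<Rightarrow> real \<Rightarrow> real).
           x 0 = (\<lambda>t. 0) \<and>
           continuous_on {0..1} y \<and> y ` {0..1} \<subseteq> {0..1} \<and>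
           (\<forall>i\<in>{1..n}. continuous_on {0..1} (x i) \<and> x i ` {0..1} \<subseteq> {0..1}) \<and>
           (\<forall>t\<in>{0..1}. \<forall>i\<in>{1..n}. (x i t, x (i - 1) t + y t) \<in> \<gamma> ` {0..1}) \<and>
           (\<forall>i\<in>{1..n}. x i 0 = 0) \<and> y 0 = 0 \<and>
           (x n 1, x (n - 1) 1 + y 1) = (1, 1)"
proof -
  define g h where "g t = fst (\<gamma> t)" "h t = snd (\<gamma> t)" for t
  have g: "profile g" and h: "profile h"
    using assms(1-4) by (auto simp: profile_def g_h_def image_subset_iff mem_Times_iff intro: continuous_intros)
  have "snd \<circ> \<gamma> = h"
    by (auto simp: g_h_def)
  then have "climbable h"
    using assms(5) h by (intro climbable_if_piecewise_monotone) (auto simp: class_U_def)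
  then obtain s where s: "climbing_chain g h n s"
    using climbing_chain_exists[OF g h] assms(6) by blast
  have s_i: "continuous_on {0..1} (s i)" "s i ` {0..1} \<subseteq> {0..1}" "s i 0 = 0" if "i \<in> {1..n}" for i
    using s that by (auto simp: climbing_chain_def)
  have step: "h (s i t) = g (s (i - 1) t) + h (s 1 t)" if "i \<in> {1..n}" "t \<in> {0..1}" for i t
    using s that unfolding climbing_chain_def by blast
  have on_curve: "(g (s i t), g (s (i - 1) t) + h (s 1 t)) = \<gamma> (s i t)"
    if "i \<in> {1..n}" "t \<in> {0..1}" for i t
    using step[OF that] by (simp add: g_h_def prod_eq_iff)
  show ?thesis
  proof (intro exI conjI ballI)
    show "(\<lambda>t. g (s 0 t)) = (\<lambda>t. 0)"
      using s g by (simp add: climbing_chain_def profile_def)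
    show "continuous_on {0..1} (\<lambda>t. h (s 1 t))" "(\<lambda>t. h (s 1 t)) ` {0..1} \<subseteq> {0..1}" "h (s 1 0) = 0"
      using s_i[of 1] h assms(6) continuous_on_compose2[of "{0..1}" h] profile_in_unit[OF h]
      by (auto simp: profile_def image_subset_iff)
    fix i assume i: "i \<in> {1..n}"
    show "continuous_on {0..1} (\<lambda>t. g (s i t))" "(\<lambda>t. g (s i t)) ` {0..1} \<subseteq> {0..1}" "g (s i 0) = 0"
      using s_i[OF i] g continuous_on_compose2[of "{0..1}" g] profile_in_unit[OF g]
      by (auto simp: profile_def image_subset_iff)
    show "(g (s i t), g (s (i - 1) t) + h (s 1 t)) \<in> \<gamma> ` {0..1}" if "t \<in> {0..1}" for t
    proof -
      have "s i t \<in> {0..1}"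
        using s_i(2)[OF i] that by (auto simp: image_subset_iff)
      then show ?thesis
        using on_curve[OF i that] by (metis imageI)
    qed
  next
    show "(g (s n 1), g (s (n - 1) 1) + h (s 1 1)) = (1, 1)"
    proof -
      have "s n 1 = 1"
        using s unfolding climbing_chain_def by blast
      then show ?thesis
        using on_curve[of n 1] assms(4,6) by simp
    qed
  qed
qed

end
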